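(* Let $n,m\in\mathbb{N}_0$. Then $L_n^{(m)}\big(3+2\,\mathrm{Re}\sqrt[3]{3(1-i\sqrt2)}\big)=0$ if and only if $n=3$ and $m=0$.
   Context: Generalized Laguerre polynomials: $L_n^{(\alpha)}(x)=\sum_{j=0}^n(-1)^j\binom{n+\alpha}{n-j}\frac{x^j}{j!}$. Here $\sqrt[3]{\cdot}$ denotes the principal cube root, so that $3+2\,\mathrm{Re}\sqrt[3]{3(1-i\sqrt2)}$ is the largest root of $L_3^{(0)}(x)=\frac16(-x^3+9x^2-18x+6)$. *)

theory Defs
  imports "HOL-Analysis.Analysis"
begin

definition laguerre :: "nat \<Rightarrow> nat \<Rightarrow> real \<Rightarrow> real" where
  "laguerre n m x = (\<Sum>j=0..n. (-1)^j * real ((n + m) choose (n - j)) * x^j / fact j)"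

definition ccbrt :: "complex \<Rightarrow> complex" where
  "ccbrt z = (if z = 0 then 0 else exp (Ln z / 3))"

definition x3 :: real where
  "x3 = 3 + 2 * Re (ccbrt (3 * (1 - \<i> * complex_of_real (sqrt 2))))"

end

theory Submission
  imports Defs "HOL-Computational_Algebra.Primes"
begin

text \<open>
  The number \<open>x3\<close> is a root of \<open>x\<^sup>3 - 9x\<^sup>2 + 18x - 6\<close> (Cardano), a cubic which is
  Eisenstein at 3, so \<open>1, x3, x3\<^sup>2\<close> are linearly independent over \<open>\<int>\<close>.
  The polynomial \<open>n! L_n^(m)\<close> has integer coefficients and leading coefficient \<open>\<plusminus>1\<close>,
  and for \<open>j \<le> n - 3\<close> its coefficient of \<open>x\<^sup>j\<close> is divisible by \<open>(n+m)(n+m-1)(n+m-2)\<close>.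
  For \<open>n + m \<ge> 5\<close> one of these three factors has a prime divisor \<open>l \<ge> 5\<close>.
  As \<open>x3 (x3\<^sup>2 - 9 x3 + 18) = 6\<close>, the element \<open>x3\<close> is invertible modulo \<open>l\<close> in \<open>\<int>[x3]\<close>,
  so \<open>x3\<close> cannot be a root: reducing modulo \<open>l\<close> would leave a nonzero integer
  relation between \<open>1, x3, x3\<^sup>2\<close>.  For \<open>n \<le> 2\<close> this works with any \<open>l\<close>, and the
  cases \<open>(3,1)\<close> and \<open>(4,0)\<close> are checked by hand.
\<close>

lemma ccbrt_power_3: "ccbrt z ^ 3 = z"
proof (cases "z = 0")
  case False
  have "exp (Ln z / 3) ^ 3 = exp (of_nat 3 * (Ln z / 3))"
    by (subst exp_of_nat_mult) simp
  with False show ?thesis by (simp add: ccbrt_def)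
qed (simp add: ccbrt_def)

lemma cube_two_Re: "(2 * Re w)^3 = 3 * (cmod w)^2 * (2 * Re w) + 2 * Re (w^3)"
proof -
  have "complex_of_real ((2 * Re w)^3) = (w + cnj w)^3"
    by (simp add: complex_add_cnj)
  also have "\<dots> = w^3 + cnj (w^3) + 3 * (w * cnj w) * (w + cnj w)"
    by (simp add: power3_eq_cube algebra_simps)
  also have "\<dots> = complex_of_real (3 * (cmod w)^2 * (2 * Re w) + 2 * Re (w^3))"
    by (simp add: complex_add_cnj flip: complex_norm_square complex_cnj_power)
  finally show ?thesis
    using of_real_eq_iff by blast
qed

lemma x3_cubic: "x3^3 = 9 * x3^2 - 18 * x3 + 6"
proof -
  define z where "z = 3 * (1 - \<i> * complex_of_real (sqrt 2))"
  define w where "w = ccbrt z"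
  have "((cmod w)^2)^3 = (cmod (w^3))^2"
    by (simp add: norm_power mult.commute flip: power_mult)
  also have "\<dots> = (cmod z)^2"
    by (simp add: w_def ccbrt_power_3)
  also have "\<dots> = 3^3"
    by (simp add: z_def cmod_def power2_eq_square)
  finally have "(cmod w)^2 = 3"
    by (subst (asm) power_eq_iff_eq_base) auto
  moreover have "Re (w^3) = 3"
    by (simp add: w_def ccbrt_power_3 z_def)
  ultimately have "(2 * Re w)^3 = 9 * (2 * Re w) + 6"
    using cube_two_Re[of w] by simp
  moreover have "x3 = 3 + 2 * Re w"
    by (simp add: x3_def w_def z_def)
  ultimately show ?thesis
    by algebra
qed

text \<open>The norm of \<open>a + b\<theta> + c\<theta>\<^sup>2\<close> for a root \<open>\<theta>\<close> of \<open>x\<^sup>3 - 9x\<^sup>2 + 18x - 6\<close>, i.e. the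
  determinant of multiplication by this element on the basis \<open>1, \<theta>, \<theta>\<^sup>2\<close>.\<close>

definition cubic_norm :: "int \<Rightarrow> int \<Rightarrow> int \<Rightarrow> int" where
  "cubic_norm a b c = a^3 + 9*a^2*b + 45*a^2*c + 18*a*b^2 + 144*a*b*c + 216*a*c^2
     + 6*b^3 + 54*b^2*c + 108*b*c^2 + 36*c^3"

lemma cubic_norm_scale_3: "cubic_norm (3 * a) (3 * b) (3 * c) = 27 * cubic_norm a b c"
  by (simp add: cubic_norm_def algebra_simps power2_eq_square power3_eq_cube)

lemma three_dvd_cube_iff: "3 dvd x^3 \<longleftrightarrow> 3 dvd (x::int)"
  by (simp add: prime_dvd_power_iff)

text \<open>Reduce modulo 3, 9 and 27 in turn: the cubic is Eisenstein at 3.\<close>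

lemma cubic_norm_eq_0_imp_3_dvd:
  assumes "cubic_norm a b c = 0"
  shows "3 dvd a \<and> 3 dvd b \<and> 3 dvd c"
proof -
  have "a^3 = cubic_norm a b c - 3 * (3*a^2*b + 15*a^2*c + 6*a*b^2 + 48*a*b*c + 72*a*c^2
      + 2*b^3 + 18*b^2*c + 36*b*c^2 + 12*c^3)"
    by (simp add: cubic_norm_def algebra_simps)
  then have "3 dvd a^3"
    using assms by simp
  then have "3 dvd a"
    by (simp add: three_dvd_cube_iff)
  then obtain a' where a: "a = 3 * a'" ..
  have "6 * b^3 = cubic_norm a b c - 9 * (3*a'^3 + 9*a'^2*b + 45*a'^2*c + 6*a'*b^2 + 48*a'*b*c
      + 72*a'*c^2 + 6*b^2*c + 12*b*c^2 + 4*c^3)"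
    by (simp add: cubic_norm_def a algebra_simps power2_eq_square power3_eq_cube)
  then have "9 dvd 6 * b^3"
    using assms by simp
  then have "3 dvd b^3"
    by presburger
  then have "3 dvd b"
    by (simp add: three_dvd_cube_iff)
  then obtain b' where b: "b = 3 * b'" ..
  have "36 * c^3 = cubic_norm a b c - 27 * (a'^3 + 9*a'^2*b' + 15*a'^2*c + 18*a'*b'^2
      + 48*a'*b'*c + 24*a'*c^2 + 6*b'^3 + 18*b'^2*c + 12*b'*c^2)"
    by (simp add: cubic_norm_def a b algebra_simps power2_eq_square power3_eq_cube)
  then have "27 dvd 36 * c^3"
    using assms by simp
  then have "3 dvd c^3"
    by presburger
  then have "3 dvd c"
    by (simp add: three_dvd_cube_iff)
  with \<open>3 dvd a\<close> \<open>3 dvd b\<close> show ?thesis by blast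
qed

lemma cubic_norm_eq_0_iff: "cubic_norm a b c = 0 \<longleftrightarrow> a = 0 \<and> b = 0 \<and> c = 0"
proof
  show "cubic_norm a b c = 0 \<Longrightarrow> a = 0 \<and> b = 0 \<and> c = 0"
  proof (induction "nat (\<bar>a\<bar> + \<bar>b\<bar> + \<bar>c\<bar>)" arbitrary: a b c rule: less_induct)
    case less
    then obtain a' b' c' where abc: "a = 3 * a'" "b = 3 * b'" "c = 3 * c'"
      using cubic_norm_eq_0_imp_3_dvd by (meson dvdE)
    show ?case
    proof (rule ccontr)
      assume "\<not> (a = 0 \<and> b = 0 \<and> c = 0)"
      then have "nat (\<bar>a'\<bar> + \<bar>b'\<bar> + \<bar>c'\<bar>) < nat (\<bar>a\<bar> + \<bar>b\<bar> + \<bar>c\<bar>)"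
        using abc by (auto simp: abs_mult)
      moreover have "cubic_norm a' b' c' = 0"
        using less.prems abc cubic_norm_scale_3 by simp
      ultimately have "a' = 0 \<and> b' = 0 \<and> c' = 0"
        by (rule less.hyps)
      with abc \<open>\<not> (a = 0 \<and> b = 0 \<and> c = 0)\<close> show False
        by simp
    qed
  qed
qed (simp add: cubic_norm_def)

lemma laguerre_3_0: "laguerre 3 0 x = (6 - 18 * x + 9 * x^2 - x^3) / 6"
  by (simp add: laguerre_def eval_nat_numeral atLeast0_atMost_Suc field_simps)

lemma laguerre_3_1: "laguerre 3 1 x = (24 - 36 * x + 12 * x^2 - x^3) / 6"
  by (simp add: laguerre_def eval_nat_numeral atLeast0_atMost_Suc field_simps)

lemma laguerre_4_0: "laguerre 4 0 x = (24 - 96 * x + 72 * x^2 - 16 * x^3 + x^4) / 24"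
  by (simp add: laguerre_def eval_nat_numeral atLeast0_atMost_Suc field_simps)

definition lag_coeff :: "nat \<Rightarrow> nat \<Rightarrow> nat \<Rightarrow> int" where
  "lag_coeff n m j = (-1)^j * int ((n choose j) * \<Prod>{Suc (m + j)..n + m})"

lemma fact_times_laguerre:
  "fact n * laguerre n m x = (\<Sum>j\<le>n. of_int (lag_coeff n m j) * x^j)"
  unfolding laguerre_def atLeast0AtMost sum_distrib_left
proof (rule sum.cong[OF refl])
  fix j assume "j \<in> {..n}"
  then have j: "j \<le> n" by simp
  have "fact (m + j) * (((n + m) choose (n - j)) * fact (n - j)) = fact (m + j) * \<Prod>{Suc (m + j)..n + m}"
    using binomial_fact_lemma[of "n - j" "n + m"] fact_eq_fact_times[of "m + j" "n + m"] j
    by (simp add: ac_simps)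
  then have falling: "((n + m) choose (n - j)) * fact (n - j) = \<Prod>{Suc (m + j)..n + m}"
    by simp
  have "(fact n :: real) = fact j * fact (n - j) * real (n choose j)"
    using binomial_fact_lemma[OF j, THEN arg_cong[where f = real]] by simp
  then have "(fact n :: real) / fact j = real (n choose j) * fact (n - j)"
    by simp
  then have "fact n * ((-1)^j * real ((n + m) choose (n - j)) * x^j / fact j)
      = (-1)^j * real (n choose j) * real (((n + m) choose (n - j)) * fact (n - j)) * x^j"
    by (simp add: field_simps)
  then show "fact n * ((-1)^j * real ((n + m) choose (n - j)) * x^j / fact j)
      = of_int (lag_coeff n m j) * x^j"
    unfolding falling lag_coeff_def by simp
qed

lemma lag_coeff_top: "lag_coeff n m n = (-1)^n"
  by (simp add: lag_coeff_def)

lemma lag_coeff_dvd: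
  assumes "j + 3 \<le> n" "i \<le> 2" "p dvd n + m - i"
  shows "int p dvd lag_coeff n m j"
proof -
  have "n + m - i \<in> {Suc (m + j)..n + m}"
    using assms(1,2) by auto
  then have "n + m - i dvd \<Prod>{Suc (m + j)..n + m}"
    by (rule dvd_prodI[OF finite_atLeastAtMost])
  then have "p dvd (n choose j) * \<Prod>{Suc (m + j)..n + m}"
    by (intro dvd_mult dvd_trans[OF assms(3)])
  then have "int p dvd int ((n choose j) * \<Prod>{Suc (m + j)..n + m})"
    by (simp only: int_dvd_int_iff)
  then show ?thesis
    unfolding lag_coeff_def by (rule dvd_mult)
qed

lemma three_consecutive_factor_coprime_6:
  fixes N :: nat
  assumes "5 \<le> N"
  obtains i x where "i \<le> 2" "1 < x" "odd x" "\<not> 3 dvd x" "x dvd N - i"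
proof -
  define q r where "q = N div 6" and "r = N mod 6"
  then have N: "N = 6 * q + r" and "r < 6"
    by simp_all
  then have "r = 1 \<or> r = 5 \<or> r = 0 \<or> r = 2 \<or> r = 3 \<or> r = 4 \<and> odd q \<or> r = 4 \<and> even q"
    by presburger
  then consider "r = 1 \<or> r = 5" | "r = 0 \<or> r = 2" | "r = 3" | "r = 4" "odd q" | "r = 4" "even q"
    by blast
  then show ?thesis
  proof cases
    case 1
    with assms N show ?thesis by (intro that[of 0 N]) (simp | presburger)+
  next
    case 2
    with assms N show ?thesis by (intro that[of 1 "N - 1"]) (simp | presburger)+
  next
    case 3
    with assms N show ?thesis by (intro that[of 2 "N - 2"]) (simp | presburger)+
  next
    case 4
    \<comment> \<open>None of \<open>N - 2, N - 1, N\<close> is prime to 6; take half of \<open>N\<close> or of \<open>N - 2\<close>.\<close>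
    with assms N show ?thesis by (intro that[of 0 "3 * q + 2"] dvdI[of _ _ 2]) presburger+
  next
    case 5
    with assms N show ?thesis by (intro that[of 2 "3 * q + 1"] dvdI[of _ _ 2]) presburger+
  qed
qed

lemma three_consecutive_prime_not_dvd_6:
  fixes N :: nat
  assumes "5 \<le> N"
  obtains p i where "prime p" "\<not> p dvd 6" "i \<le> 2" "p dvd N - i"
proof -
  obtain i x where ix: "i \<le> 2" "1 < x" "odd x" "\<not> 3 dvd x" "x dvd N - i"
    using three_consecutive_factor_coprime_6[OF assms] .
  obtain p where p: "prime p" "p dvd x"
    using prime_factor_nat[of x] ix(2) by auto
  have "\<not> p dvd 6"
  proof
    assume "p dvd 6"
    then have "p dvd 2 \<or> p dvd 3"
      using p(1) prime_dvd_mult_iff[of p 2 3] by simp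
    then have "p \<le> 3"
      by (auto dest: dvd_imp_le)
    moreover have "p \<noteq> 2" "p \<noteq> 3"
      using p(2) ix(3,4) by auto
    moreover have "2 \<le> p"
      using p(1) by (rule prime_ge_2_nat)
    ultimately show False
      by linarith
  qed
  with p ix show ?thesis
    using dvd_trans[OF p(2) ix(5)] by (intro that[of p i])
qed

locale laguerre_3_0_root =
  fixes \<theta> :: real
  assumes cubic: "\<theta>^3 = 9 * \<theta>^2 - 18 * \<theta> + 6"
begin

lemma int_comb_eq_0_iff:
  "of_int a + of_int b * \<theta> + of_int c * \<theta>^2 = 0 \<longleftrightarrow> a = 0 \<and> b = 0 \<and> c = 0"
proof
  define A B C where "A = real_of_int a" and "B = real_of_int b" and "C = real_of_int c"
  assume E0: "of_int a + of_int b * \<theta> + of_int c * \<theta>^2 = 0"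
  then have E0: "A + B * \<theta> + C * \<theta>^2 = 0"
    by (simp add: A_def B_def C_def)
  have E1: "6 * C + (A - 18 * C) * \<theta> + (B + 9 * C) * \<theta>^2 = 0"
  proof -
    have "\<theta> * (A + B * \<theta> + C * \<theta>^2) - C * (\<theta>^3 - (9 * \<theta>^2 - 18 * \<theta> + 6)) = 0"
      using E0 cubic by simp
    then show ?thesis
      by (simp add: algebra_simps power2_eq_square power3_eq_cube)
  qed
  have E2: "(6 * B + 54 * C) + (-18 * B - 156 * C) * \<theta> + (A + 9 * B + 63 * C) * \<theta>^2 = 0"
  proof -
    have "\<theta> * (6 * C + (A - 18 * C) * \<theta> + (B + 9 * C) * \<theta>^2)
        - (B + 9 * C) * (\<theta>^3 - (9 * \<theta>^2 - 18 * \<theta> + 6)) = 0"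
      using E1 cubic by simp
    then show ?thesis
      by (simp add: algebra_simps power2_eq_square power3_eq_cube)
  qed
  \<comment> \<open>E0, E1, E2 say that the multiplication matrix \<open>M\<close> of \<open>a + b\<theta> + c\<theta>\<^sup>2\<close> kills
    \<open>(1, \<theta>, \<theta>\<^sup>2)\<close>; expanding \<open>det M\<close> along the first column writes it as a combination
    of the rows of \<open>M\<close>.\<close>
  have "real_of_int (cubic_norm a b c) =
      ((A - 18 * C) * (A + 9 * B + 63 * C) - (B + 9 * C) * (-18 * B - 156 * C))
        * (A + B * \<theta> + C * \<theta>^2)
    - (B * (A + 9 * B + 63 * C) - C * (-18 * B - 156 * C))
        * (6 * C + (A - 18 * C) * \<theta> + (B + 9 * C) * \<theta>^2)
    + (B * (B + 9 * C) - C * (A - 18 * C))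
        * ((6 * B + 54 * C) + (-18 * B - 156 * C) * \<theta> + (A + 9 * B + 63 * C) * \<theta>^2)"
    unfolding cubic_norm_def A_def B_def C_def
    by (simp add: algebra_simps power2_eq_square power3_eq_cube)
  also have "\<dots> = 0"
    using E0 E1 E2 by simp
  finally show "a = 0 \<and> b = 0 \<and> c = 0"
    by (simp add: cubic_norm_eq_0_iff)
qed simp

lemma times_cofactor_eq_6: "\<theta> * (\<theta>^2 - 9 * \<theta> + 18) = 6"
  using cubic by algebra

definition Z_theta :: "real set" where
  "Z_theta = {of_int a + of_int b * \<theta> + of_int c * \<theta>^2 | a b c. True}"

lemma Z_thetaI: "of_int a + of_int b * \<theta> + of_int c * \<theta>^2 \<in> Z_theta"
  unfolding Z_theta_def by blast

lemma Z_thetaE: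
  assumes "z \<in> Z_theta"
  obtains a b c where "z = of_int a + of_int b * \<theta> + of_int c * \<theta>^2"
  using assms unfolding Z_theta_def by blast

lemma of_int_in_Z_theta: "of_int k \<in> Z_theta"
  using Z_thetaI[of k 0 0] by simp

lemma theta_in_Z_theta: "\<theta> \<in> Z_theta"
  using Z_thetaI[of 0 1 0] by simp

lemma Z_theta_add:
  assumes "y \<in> Z_theta" "z \<in> Z_theta"
  shows "y + z \<in> Z_theta"
proof -
  obtain a b c where "y = of_int a + of_int b * \<theta> + of_int c * \<theta>^2"
    using assms(1) by (rule Z_thetaE)
  moreover obtain a' b' c' where "z = of_int a' + of_int b' * \<theta> + of_int c' * \<theta>^2"
    using assms(2) by (rule Z_thetaE)
  ultimately have "y + z = of_int (a + a') + of_int (b + b') * \<theta> + of_int (c + c') * \<theta>^2"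
    by (simp add: algebra_simps)
  then show ?thesis
    by (simp only: Z_thetaI)
qed

lemma Z_theta_times_of_int:
  assumes "z \<in> Z_theta"
  shows "of_int k * z \<in> Z_theta"
proof -
  obtain a b c where "z = of_int a + of_int b * \<theta> + of_int c * \<theta>^2"
    using assms by (rule Z_thetaE)
  then have "of_int k * z = of_int (k * a) + of_int (k * b) * \<theta> + of_int (k * c) * \<theta>^2"
    by (simp add: algebra_simps)
  then show ?thesis
    by (simp only: Z_thetaI)
qed

lemma Z_theta_times_theta:
  assumes "z \<in> Z_theta"
  shows "\<theta> * z \<in> Z_theta"
proof -
  obtain a b c where "z = of_int a + of_int b * \<theta> + of_int c * \<theta>^2"
    using assms by (rule Z_thetaE)
  then have "\<theta> * z = of_int (6 * c) + of_int (a - 18 * c) * \<theta> + of_int (b + 9 * c) * \<theta>^2"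
    using cubic by simp algebra
  then show ?thesis
    by (simp only: Z_thetaI)
qed

lemma Z_theta_mult:
  assumes "y \<in> Z_theta" "z \<in> Z_theta"
  shows "y * z \<in> Z_theta"
proof -
  obtain a b c where y: "y = of_int a + of_int b * \<theta> + of_int c * \<theta>^2"
    using assms(1) by (rule Z_thetaE)
  have "y * z = of_int a * z + of_int b * (\<theta> * z) + of_int c * (\<theta> * (\<theta> * z))"
    unfolding y by (simp add: algebra_simps power2_eq_square)
  then show ?thesis
    using assms(2) by (simp add: Z_theta_add Z_theta_times_of_int Z_theta_times_theta)
qed

lemma Z_theta_power: "z \<in> Z_theta \<Longrightarrow> z ^ k \<in> Z_theta"
  using of_int_in_Z_theta[of 1] by (induction k) (auto intro: Z_theta_mult)

lemma Z_theta_sum: "(\<And>j. j \<in> A \<Longrightarrow> f j \<in> Z_theta) \<Longrightarrow> sum f A \<in> Z_theta"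
  using of_int_in_Z_theta[of 0]
  by (induction A rule: infinite_finite_induct) (auto intro: Z_theta_add)

text \<open>Modulo \<open>l\<close> the sum is \<open>\<theta>\<^sup>k h\<close> with \<open>k = n - 2\<close> and \<open>h\<close> its top three terms;
  multiplying by the \<open>k\<close>-th power of the cofactor of \<open>\<theta>\<close> turns \<open>\<theta>\<^sup>k\<close> into the
  \<open>l\<close>-adic unit \<open>6\<^sup>k\<close>, and linear independence then isolates the leading coefficient.\<close>

lemma root_prime_dvd_lead_coeff:
  fixes c :: "nat \<Rightarrow> int" and l :: int
  assumes root: "(\<Sum>j\<le>n. of_int (c j) * \<theta>^j) = 0"
    and l: "prime l" "\<not> l dvd 6"
    and low: "\<And>j. j + 3 \<le> n \<Longrightarrow> l dvd c j"
  shows "l dvd c n"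
proof (cases "n < 2")
  case True
  then consider "n = 0" | "n = 1"
    by linarith
  then show ?thesis
  proof cases
    case 1
    with root show ?thesis by simp
  next
    case 2
    with root int_comb_eq_0_iff[of "c 0" "c 1" 0] show ?thesis by simp
  qed
next
  case False
  define k where "k = n - 2"
  then have n: "n = k + 2"
    using False by simp
  define h where "h = of_int (c k) + of_int (c (k + 1)) * \<theta> + of_int (c (k + 2)) * \<theta>^2"
  define d where "d j = c j div l" for j
  have d: "c j = l * d j" if "j < k" for j
    using low[of j] that by (simp add: d_def n)
  define z where "z = (\<Sum>j<k. of_int (d j) * \<theta>^j)"
  have "z \<in> Z_theta"
    unfolding z_def
    by (intro Z_theta_sum Z_theta_times_of_int Z_theta_power theta_in_Z_theta)
  have "(\<Sum>j\<le>n. of_int (c j) * \<theta>^j) = of_int l * z + \<theta>^k * h"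
    unfolding n z_def h_def
    by (simp add: d sum_distrib_left lessThan_Suc_atMost[symmetric] algebra_simps power2_eq_square)
  then have "\<theta>^k * h = of_int l * - z"
    using root by simp
  moreover have "(\<theta>^2 - 9 * \<theta> + 18)^k * \<theta>^k = 6^k"
    using times_cofactor_eq_6 by (simp add: mult.commute flip: power_mult_distrib)
  ultimately have six_pow: "6^k * h = of_int l * ((\<theta>^2 - 9 * \<theta> + 18)^k * - z)"
    by (metis mult.assoc mult.left_commute)
  have "\<theta>^2 - 9 * \<theta> + 18 = of_int 18 + of_int (-9) * \<theta> + of_int 1 * \<theta>^2"
    by simp
  then have "\<theta>^2 - 9 * \<theta> + 18 \<in> Z_theta"
    by (simp only: Z_thetaI)
  then have "(\<theta>^2 - 9 * \<theta> + 18)^k * - z \<in> Z_theta"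
    using Z_theta_times_of_int[OF \<open>z \<in> Z_theta\<close>, of "-1"]
    by (intro Z_theta_mult Z_theta_power) simp_all
  then obtain a b e where
    "(\<theta>^2 - 9 * \<theta> + 18)^k * - z = of_int a + of_int b * \<theta> + of_int e * \<theta>^2"
    by (rule Z_thetaE)
  with six_pow have "6^k * h = of_int l * (of_int a + of_int b * \<theta> + of_int e * \<theta>^2)"
    by (simp only:)
  then have "of_int (6^k * c k - l * a) + of_int (6^k * c (k + 1) - l * b) * \<theta>
      + of_int (6^k * c n - l * e) * \<theta>^2 = 0"
    unfolding h_def n by (simp add: algebra_simps)
  then have "6^k * c n = l * e"
    by (simp only: int_comb_eq_0_iff) simp
  then have "l dvd 6^k * c n"
    by simp
  with l show ?thesis
    by (meson prime_dvd_mult_iff prime_dvd_power)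
qed

lemma laguerre_3_0_eq_0: "laguerre 3 0 \<theta> = 0"
  unfolding laguerre_3_0 cubic by simp

lemma laguerre_3_1_neq_0: "laguerre 3 1 \<theta> \<noteq> 0"
proof -
  have "6 * laguerre 3 1 \<theta> = of_int 18 + of_int (-18) * \<theta> + of_int 3 * \<theta>^2"
    unfolding laguerre_3_1 cubic by simp
  then show ?thesis
    using int_comb_eq_0_iff[of 18 "-18" 3] by auto
qed

lemma laguerre_4_0_neq_0: "laguerre 4 0 \<theta> \<noteq> 0"
proof -
  have "\<theta>^4 = 63 * \<theta>^2 - 156 * \<theta> + 54"
    using cubic by algebra
  then have "24 * laguerre 4 0 \<theta> = of_int (-18) + of_int 36 * \<theta> + of_int (-9) * \<theta>^2"
    unfolding laguerre_4_0 cubic by simp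
  then show ?thesis
    using int_comb_eq_0_iff[of "-18" 36 "-9"] by auto
qed

lemma laguerre_root_low_coeff_not_dvd:
  assumes "laguerre n m \<theta> = 0" and l: "prime l" "\<not> l dvd 6"
  obtains j where "j + 3 \<le> n" "\<not> l dvd lag_coeff n m j"
proof -
  have "(\<Sum>j\<le>n. of_int (lag_coeff n m j) * \<theta>^j) = 0"
    using fact_times_laguerre[of n m \<theta>] assms(1) by simp
  moreover have "\<not> l dvd lag_coeff n m n"
  proof
    assume "l dvd lag_coeff n m n"
    moreover have "is_unit (lag_coeff n m n)"
      by (simp add: lag_coeff_top)
    ultimately show False
      using l(1) dvd_unit_imp_unit not_prime_unit by blast
  qed
  ultimately have "\<not> (\<forall>j. j + 3 \<le> n \<longrightarrow> l dvd lag_coeff n m j)"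
    using root_prime_dvd_lead_coeff l by blast
  then show ?thesis
    using that by blast
qed

lemma laguerre_eq_0_iff: "laguerre n m \<theta> = 0 \<longleftrightarrow> n = 3 \<and> m = 0"
proof
  assume root: "laguerre n m \<theta> = 0"
  obtain j where "j + 3 \<le> n"
    using laguerre_root_low_coeff_not_dvd[OF root, where l = 5] by auto
  then have "3 \<le> n"
    by simp
  moreover have "n + m < 5"
  proof (rule ccontr)
    assume "\<not> n + m < 5"
    then have "5 \<le> n + m"
      by simp
    then obtain p i where p: "prime p" "\<not> p dvd 6" and i: "i \<le> 2" "p dvd n + m - i"
      by (rule three_consecutive_prime_not_dvd_6)
    moreover have "\<not> int p dvd 6"
      using p(2) by (simp flip: int_dvd_int_iff)
    ultimately obtain j where "j + 3 \<le> n" "\<not> int p dvd lag_coeff n m j"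
      using laguerre_root_low_coeff_not_dvd[OF root, where l = "int p"] by auto
    with lag_coeff_dvd[OF _ i] show False
      by blast
  qed
  ultimately have "n = 3 \<and> m = 0 \<or> n = 3 \<and> m = 1 \<or> n = 4 \<and> m = 0"
    by auto
  with root show "n = 3 \<and> m = 0"
    using laguerre_3_1_neq_0 laguerre_4_0_neq_0 by auto
next
  assume "n = 3 \<and> m = 0"
  then show "laguerre n m \<theta> = 0"
    using laguerre_3_0_eq_0 by simp
qed

end

interpretation x3: laguerre_3_0_root x3
  by unfold_locales (rule x3_cubic)

theorem proposition4:
  fixes n m :: nat
  shows "laguerre n m x3 = 0 \<longleftrightarrow> n = 3 \<and> m = 0"
  by (rule x3.laguerre_eq_0_iff)

end
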